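(* Let $A$ be a unital $C^*$-algebra with a strongly continuous action $\sigma$ of $S^1$, let $\mathcal A\subseteq A$ be a norm-dense unital $*$-subalgebra, $B$ a unital $C^*$-algebra, $\beta_i:\mathcal A\to B$ a unital algebra homomorphism, $\beta_{-i}(a):=\beta_i(a^* )^*$, and $L_\beta:\mathcal A\to[0,\infty)$ a slip-norm. Suppose: (a) $P_0(\mathcal A)\subseteq\mathcal A$ and there exist $\zeta_1^R,\dots,\zeta_k^R,\zeta_1^L,\dots,\zeta_m^L\in\mathcal A\cap A_1$ with $\sum_j\zeta_j^R(\zeta_j^R)^*=1=\sum_j(\zeta_j^L)^*\zeta_j^L$; (b) $L_\beta(ab)\le L_\beta(a)\|\beta_i(b)\|+\|\beta_{-i}(a)\|L_\beta(b)$ for all $a,b\in\mathcal A$, and the restriction of $\beta_i$ to $\mathcal A\cap A_0$ extends to a unital $*$-homomorphism $A_0\to B$. Then for every $n\in\mathbb Z$ and every $y\in\mathcal A_n:=\mathcal A\cap A_n$ there is a constant $C_y\ge0$ such that $L_\beta(y^*x)\le C_y\cdot(L_\beta(x)+\|x\|)$ for all $x\in\mathcal A_n$.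
   Context: $A_n:=\{a\in A:\sigma_\lambda(a)=\lambda^na\ \forall\lambda\in S^1\}$, $P_0(a):=\frac1{2\pi}\int_0^{2\pi}\sigma_{e^{it}}(a)dt$. A slip-norm is a seminorm $L$ with $L(1)=0$ and $L(a^* )=L(a)$. *)

theory Defs
  imports "HOL-Analysis.Analysis"
begin

text \<open>HOL has no complex normed algebras as a type class.  A complex unital Banach
algebra is rendered as a real unital Banach algebra together with a central element
j with j*j = -1 (the image of the imaginary unit); complex scalar multiplication is
then c . a = Re c a + Im c (j a), and we require norm (c . a) = |c| norm a.\<close>

definition scC :: "'a::real_normed_algebra_1 \<Rightarrow> complex \<Rightarrow> 'a \<Rightarrow> 'a" where
  "scC j c a = Re c *\<^sub>R a + Im c *\<^sub>R (j * a)"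

definition complex_unital_banach_alg :: "'a::{real_normed_algebra_1,banach} \<Rightarrow> bool" where
  "complex_unital_banach_alg j \<longleftrightarrow>
     j * j = -1 \<and> (\<forall>a. j * a = a * j) \<and>
     (\<forall>c a. norm (scC j c a) = cmod c * norm a)"

definition cstar_algebra :: "'a::{real_normed_algebra_1,banach} \<Rightarrow> ('a \<Rightarrow> 'a) \<Rightarrow> bool" where
  "cstar_algebra j st \<longleftrightarrow>
     complex_unital_banach_alg j \<and>
     (\<forall>a. st (st a) = a) \<and>
     (\<forall>a b. st (a + b) = st a + st b) \<and>
     (\<forall>c a. st (scC j c a) = scC j (cnj c) (st a)) \<and>
     (\<forall>a b. st (a * b) = st b * st a) \<and>
     (\<forall>a. norm (st a * a) = (norm a)\<^sup>2)"

text \<open>Strongly continuous action of the circle S^1 by *-automorphisms.  The map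
sigma is only relevant on the unit circle.\<close>
definition circle_action ::
  "'a::{real_normed_algebra_1,banach} \<Rightarrow> ('a \<Rightarrow> 'a) \<Rightarrow> (complex \<Rightarrow> 'a \<Rightarrow> 'a) \<Rightarrow> bool" where
  "circle_action j st \<sigma> \<longleftrightarrow>
     (\<forall>a. \<sigma> 1 a = a) \<and>
     (\<forall>l m a. cmod l = 1 \<longrightarrow> cmod m = 1 \<longrightarrow> \<sigma> (l * m) a = \<sigma> l (\<sigma> m a)) \<and>
     (\<forall>l. cmod l = 1 \<longrightarrow>
        (\<forall>a b. \<sigma> l (a + b) = \<sigma> l a + \<sigma> l b) \<and>
        (\<forall>c a. \<sigma> l (scC j c a) = scC j c (\<sigma> l a)) \<and>
        (\<forall>a b. \<sigma> l (a * b) = \<sigma> l a * \<sigma> l b) \<and>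
        \<sigma> l 1 = 1 \<and>
        (\<forall>a. \<sigma> l (st a) = st (\<sigma> l a))) \<and>
     (\<forall>a. continuous_on {z. cmod z = 1} (\<lambda>z. \<sigma> z a))"

definition spec_sub :: "'a::real_normed_algebra_1 \<Rightarrow> (complex \<Rightarrow> 'a \<Rightarrow> 'a) \<Rightarrow> int \<Rightarrow> 'a set" where
  "spec_sub j \<sigma> n = {a. \<forall>l. cmod l = 1 \<longrightarrow> \<sigma> l a = scC j (l powi n) a}"

definition P0 :: "(complex \<Rightarrow> 'a::{real_normed_algebra_1,banach} \<Rightarrow> 'a) \<Rightarrow> 'a \<Rightarrow> 'a" where
  "P0 \<sigma> a = (1 / (2 * pi)) *\<^sub>R integral {0..2*pi} (\<lambda>t. \<sigma> (cis t) a)"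

definition dense_unital_star_subalg ::
  "'a::{real_normed_algebra_1,banach} \<Rightarrow> ('a \<Rightarrow> 'a) \<Rightarrow> 'a set \<Rightarrow> bool" where
  "dense_unital_star_subalg j st S \<longleftrightarrow>
     1 \<in> S \<and>
     (\<forall>a\<in>S. \<forall>b\<in>S. a + b \<in> S \<and> a * b \<in> S) \<and>
     (\<forall>c. \<forall>a\<in>S. scC j c a \<in> S) \<and>
     (\<forall>a\<in>S. st a \<in> S) \<and>
     closure S = UNIV"

definition unital_alg_hom_on ::
  "'a::real_normed_algebra_1 \<Rightarrow> 'b::real_normed_algebra_1 \<Rightarrow> 'a set \<Rightarrow> ('a \<Rightarrow> 'b) \<Rightarrow> bool" where
  "unital_alg_hom_on jA jB S f \<longleftrightarrow>
     (\<forall>a\<in>S. \<forall>b\<in>S. f (a + b) = f a + f b \<and> f (a * b) = f a * f b) \<and>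
     (\<forall>c. \<forall>a\<in>S. f (scC jA c a) = scC jB c (f a)) \<and>
     f 1 = 1"

definition unital_star_hom_on ::
  "'a::real_normed_algebra_1 \<Rightarrow> ('a \<Rightarrow> 'a) \<Rightarrow> 'b::real_normed_algebra_1 \<Rightarrow> ('b \<Rightarrow> 'b)
     \<Rightarrow> 'a set \<Rightarrow> ('a \<Rightarrow> 'b) \<Rightarrow> bool" where
  "unital_star_hom_on jA stA jB stB S f \<longleftrightarrow>
     unital_alg_hom_on jA jB S f \<and> (\<forall>a\<in>S. f (stA a) = stB (f a))"

definition slip_norm_on ::
  "'a::real_normed_algebra_1 \<Rightarrow> ('a \<Rightarrow> 'a) \<Rightarrow> 'a set \<Rightarrow> ('a \<Rightarrow> real) \<Rightarrow> bool" where
  "slip_norm_on j st S L \<longleftrightarrow>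
     (\<forall>a\<in>S. L a \<ge> 0) \<and>
     (\<forall>a\<in>S. \<forall>b\<in>S. L (a + b) \<le> L a + L b) \<and>
     (\<forall>c. \<forall>a\<in>S. L (scC j c a) = cmod c * L a) \<and>
     L 1 = 0 \<and>
     (\<forall>a\<in>S. L (st a) = L a)"

end

theory Submission
  imports Defs "HOL-Computational_Algebra.Formal_Power_Series"
begin

text \<open>By the Leibniz inequality (b), \<open>L(y\<^sup>* x) \<le> L(y) \<parallel>\<beta>(x)\<parallel> + \<parallel>\<beta>\<^sub>-\<^sub>i(y\<^sup>*)\<parallel> L(x)\<close>,
so it suffices that \<open>\<beta>\<close> be bounded on every spectral subspace \<open>\<A> \<inter> A\<^sub>n\<close>.
For \<open>n = 0\<close> this holds because \<open>\<beta>\<close> agrees there with a unital *-homomorphism on the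
C*-algebra \<open>A\<^sub>0\<close>, and such a map has norm at most 2: a self-adjoint \<open>h\<close> with
\<open>\<parallel>h\<parallel> \<le> 1/2\<close> is the real part of the unitary \<open>h + i\<surd>(1 - h\<^sup>2)\<close>, the square root being the
binomial series, which stays in \<open>A\<^sub>0\<close> since \<open>A\<^sub>0\<close> is closed (each \<open>\<sigma>\<^sub>\<lambda>\<close>, being a
*-automorphism, obeys the same norm bound).  The bound passes from
\<open>A\<^sub>n\<close> to \<open>A\<^sub>n\<^sub>+\<^sub>1\<close> and \<open>A\<^sub>n\<^sub>-\<^sub>1\<close> through the decompositions
\<open>x = \<Sum> \<zeta>\<^sub>j\<^sup>R ((\<zeta>\<^sub>j\<^sup>R)\<^sup>* x)\<close> and \<open>x = \<Sum> (\<zeta>\<^sub>j\<^sup>L)\<^sup>* (\<zeta>\<^sub>j\<^sup>L x)\<close>.\<close>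

lemma scC_of_real [simp]: "scC j (of_real r) a = r *\<^sub>R a"
  by (simp add: scC_def)

lemma scC_one [simp]: "scC j 1 a = a"
  by (simp add: scC_def)

lemma scC_ii [simp]: "scC j \<i> a = j * a"
  by (simp add: scC_def)

lemma complex_unital_banach_algD:
  assumes "complex_unital_banach_alg j"
  shows "j * j = -1" "j * a = a * j"
  using assms unfolding complex_unital_banach_alg_def by blast+

lemma scC_mult:
  assumes "complex_unital_banach_alg j"
  shows "scC j c a * scC j d b = scC j (c * d) (a * b)"
proof -
  note jj = complex_unital_banach_algD(1)[OF assms]
  note jc = complex_unital_banach_algD(2)[OF assms]
  have e1: "a * (j * b) = j * (a * b)" by (metis jc mult.assoc)
  have e2: "(j * a) * (j * b) = - (a * b)"
    by (metis e1 jj mult.assoc mult_minus_left mult_1_left)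
  have e3: "(j * a) * b = j * (a * b)" by (simp add: mult.assoc)
  have "scC j c a * scC j d b = (Re c * Re d) *\<^sub>R (a * b) + (Re c * Im d) *\<^sub>R (a * (j * b))
      + ((Im c * Re d) *\<^sub>R ((j * a) * b) + (Im c * Im d) *\<^sub>R ((j * a) * (j * b)))"
    unfolding scC_def
    by (simp only: distrib_left distrib_right mult_scaleR_left mult_scaleR_right
        scaleR_scaleR scaleR_add_right) (simp add: ac_simps)
  also have "\<dots> = (Re c * Re d - Im c * Im d) *\<^sub>R (a * b) + (Re c * Im d + Im c * Re d) *\<^sub>R (j * (a * b))"
    unfolding e1 e2 e3 scaleR_diff_left scaleR_add_left scaleR_minus_right by (simp add: algebra_simps)
  also have "\<dots> = scC j (c * d) (a * b)"
    unfolding scC_def by simp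
  finally show ?thesis .
qed

lemma
  assumes "cstar_algebra j st"
  shows cstar_complex_unital_banach_alg: "complex_unital_banach_alg j"
    and cstar_star_star: "st (st a) = a"
    and cstar_star_add: "st (a + b) = st a + st b"
    and cstar_star_mult: "st (a * b) = st b * st a"
    and cstar_norm_star_mult_self: "norm (st a * a) = (norm a)\<^sup>2"
    and cstar_star_scaleR: "st (r *\<^sub>R a) = r *\<^sub>R st a"
    and cstar_star_scC: "st (scC j c a) = scC j (cnj c) (st a)"
  using assms unfolding cstar_algebra_def by (metis complex_cnj_complex_of_real scC_of_real)+

lemma cstar_star_one:
  assumes "cstar_algebra j st"
  shows "st 1 = 1"
  by (metis assms cstar_star_star cstar_star_mult mult_1_right)

lemma cstar_star_j:
  assumes "cstar_algebra j st"
  shows "st j = - j"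
  using cstar_star_scC[OF assms, of \<i> 1] cstar_star_one[OF assms] by (simp add: scC_def)

lemma cstar_norm_star:
  assumes "cstar_algebra j st"
  shows "norm (st a) = norm a"
proof -
  have le: "norm x \<le> norm (st x)" for x
  proof (cases "x = 0")
    case False
    have "(norm x)\<^sup>2 \<le> norm (st x) * norm x"
      using cstar_norm_star_mult_self[OF assms, of x] norm_mult_ineq[of "st x" x] by simp
    then show ?thesis using False by (simp add: power2_eq_square)
  qed simp
  show ?thesis
    using le[of a] le[of "st a"] cstar_star_star[OF assms] by simp
qed

lemma cstar_bounded_linear_star:
  assumes "cstar_algebra j st"
  shows "bounded_linear st"
  by (rule bounded_linear_intro[where K = 1])
    (use assms in \<open>auto simp: cstar_star_add cstar_star_scaleR cstar_norm_star\<close>)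

lemma cstar_norm_le_1_if_isometry:
  assumes "cstar_algebra j st" "st u * u = 1"
  shows "norm u \<le> 1"
proof -
  have "(norm u)\<^sup>2 = 1"
    using cstar_norm_star_mult_self[OF assms(1), of u] assms(2) by simp
  then show ?thesis by (auto simp: power2_eq_1_iff)
qed

definition sqrt_coeff :: "nat \<Rightarrow> real" where
  "sqrt_coeff k = (-1) ^ k * ((1/2 :: real) gchoose k)"

lemma abs_sqrt_coeff_le_1: "\<bar>sqrt_coeff k\<bar> \<le> 1"
proof (induction k)
  case 0
  then show ?case by (simp add: sqrt_coeff_def)
next
  case (Suc k)
  have rec: "((1/2 :: real) gchoose Suc k) = ((1/2 - k) / Suc k) * ((1/2 :: real) gchoose k)"
    using gbinomial_mult_1[of "1/2 :: real" k] by (simp add: field_simps del: of_nat_Suc)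
  have ratio: "\<bar>(1/2 - real k) / real (Suc k)\<bar> \<le> 1"
    unfolding abs_divide by (simp add: abs_if pos_divide_le_eq del: of_nat_Suc)
  have "\<bar>sqrt_coeff (Suc k)\<bar> = \<bar>(1/2 - real k) / real (Suc k)\<bar> * \<bar>sqrt_coeff k\<bar>"
    unfolding sqrt_coeff_def rec by (simp add: abs_mult power_abs)
  also have "\<dots> \<le> 1 * 1"
    using ratio Suc.IH by (intro mult_mono) auto
  finally show ?case by simp
qed

lemma sqrt_coeff_convolution:
  "(\<Sum>i\<le>k. sqrt_coeff i * sqrt_coeff (k - i)) = (if k = 0 then 1 else if k = 1 then -1 else 0)"
proof -
  have "(\<Sum>i\<le>k. sqrt_coeff i * sqrt_coeff (k - i))
      = (-1) ^ k * (\<Sum>i\<le>k. ((1/2 :: real) gchoose i) * ((1/2) gchoose (k - i)))"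
    unfolding sum_distrib_left sqrt_coeff_def
  proof (rule sum.cong)
    fix i assume "i \<in> {..k}"
    then have "(-1 :: real) ^ k = (-1) ^ i * (-1) ^ (k - i)"
      by (simp add: power_add[symmetric])
    then show "(-1) ^ i * (1/2 gchoose i) * ((-1) ^ (k - i) * (1/2 gchoose (k - i))) =
        (-1 :: real) ^ k * ((1/2 gchoose i) * (1/2 gchoose (k - i)))" by simp
  qed simp
  also have "\<dots> = (-1) ^ k * real (1 choose k)"
    using gbinomial_Vandermonde[of "1/2 :: real" "1/2" k]
    by (simp add: atMost_atLeast0 binomial_gbinomial)
  finally have conv: "(\<Sum>i\<le>k. sqrt_coeff i * sqrt_coeff (k - i)) = (-1) ^ k * real (1 choose k)" .
  consider "k = 0" | "k = 1" | "k > 1" by linarith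
  then show ?thesis
    using conv by cases (simp_all add: binomial_eq_0)
qed

text \<open>The crude bound \<open>\<bar>sqrt_coeff k\<bar> \<le> 1\<close>
gives convergence for \<open>\<parallel>t\<parallel> \<le> 1/2\<close>, which is all that is needed.\<close>

definition sqrt_one_minus :: "'a::{real_normed_algebra_1,banach} \<Rightarrow> 'a" where
  "sqrt_one_minus t = (\<Sum>k. sqrt_coeff k *\<^sub>R t ^ k)"

lemma summable_norm_sqrt_series:
  fixes t :: "'a::real_normed_algebra_1"
  assumes "norm t \<le> 1/2"
  shows "summable (\<lambda>k. norm (sqrt_coeff k *\<^sub>R t ^ k))"
proof (rule summable_comparison_test[of _ "\<lambda>k. (1/2 :: real) ^ k"])
  show "summable (\<lambda>k. (1/2 :: real) ^ k)"
    by (rule summable_geometric) simp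
  have "norm (sqrt_coeff k *\<^sub>R t ^ k) \<le> (1/2) ^ k" for k
  proof -
    have "norm (sqrt_coeff k *\<^sub>R t ^ k) \<le> 1 * norm t ^ k"
      unfolding norm_scaleR real_norm_def
      by (rule mult_mono) (simp_all add: abs_sqrt_coeff_le_1 norm_power_ineq)
    also have "\<dots> \<le> (1/2) ^ k"
      using assms by (simp add: power_mono)
    finally show ?thesis .
  qed
  then show "\<exists>N. \<forall>k\<ge>N. norm (norm (sqrt_coeff k *\<^sub>R t ^ k)) \<le> (1/2) ^ k"
    by simp
qed

lemma summable_sqrt_series:
  fixes t :: "'a::{real_normed_algebra_1,banach}"
  assumes "norm t \<le> 1/2"
  shows "summable (\<lambda>k. sqrt_coeff k *\<^sub>R t ^ k)"
  by (rule summable_norm_cancel[OF summable_norm_sqrt_series[OF assms]])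

lemma sqrt_one_minus_square:
  fixes t :: "'a::{real_normed_algebra_1,banach}"
  assumes "norm t \<le> 1/2"
  shows "sqrt_one_minus t * sqrt_one_minus t = 1 - t"
proof -
  have "sqrt_one_minus t * sqrt_one_minus t
      = (\<Sum>k. \<Sum>i\<le>k. (sqrt_coeff i *\<^sub>R t ^ i) * (sqrt_coeff (k - i) *\<^sub>R t ^ (k - i)))"
    unfolding sqrt_one_minus_def
    by (rule Cauchy_product[OF summable_norm_sqrt_series[OF assms] summable_norm_sqrt_series[OF assms]])
  also have "\<dots> = (\<Sum>k. if k = 0 then 1 else if k = 1 then -t else 0)"
  proof (rule suminf_cong)
    fix k
    have "(\<Sum>i\<le>k. (sqrt_coeff i *\<^sub>R t ^ i) * (sqrt_coeff (k - i) *\<^sub>R t ^ (k - i)))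
        = (\<Sum>i\<le>k. sqrt_coeff i * sqrt_coeff (k - i)) *\<^sub>R t ^ k"
      unfolding scaleR_sum_left by (rule sum.cong) (auto simp: power_add[symmetric])
    then show "(\<Sum>i\<le>k. (sqrt_coeff i *\<^sub>R t ^ i) * (sqrt_coeff (k - i) *\<^sub>R t ^ (k - i)))
        = (if k = 0 then 1 else if k = 1 then -t else 0)"
      by (simp add: sqrt_coeff_convolution)
  qed
  also have "\<dots> = (\<Sum>k\<in>{0, 1 :: nat}. if k = 0 then 1 else if k = 1 then -t else 0)"
    by (subst suminf_finite[of "{0, 1}"]) auto
  finally show ?thesis by simp
qed

lemma sqrt_one_minus_commute:
  fixes t :: "'a::{real_normed_algebra_1,banach}"
  assumes "norm t \<le> 1/2" "x * t = t * x"
  shows "x * sqrt_one_minus t = sqrt_one_minus t * x"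
proof -
  note s = summable_sqrt_series[OF assms(1)]
  have "x * t ^ k = t ^ k * x" for k
    by (metis assms(2) power_commuting_commutes)
  then have "(\<Sum>k. x * (sqrt_coeff k *\<^sub>R t ^ k)) = (\<Sum>k. (sqrt_coeff k *\<^sub>R t ^ k) * x)"
    by simp
  then show ?thesis
    unfolding sqrt_one_minus_def suminf_mult[OF s, symmetric] suminf_mult2[OF s, symmetric] .
qed

lemma sqrt_one_minus_mem_closed:
  fixes t :: "'a::{real_normed_algebra_1,banach}"
  assumes "norm t \<le> 1/2" "closed S" "0 \<in> S" "\<And>k. t ^ k \<in> S"
    and "\<And>a b. a \<in> S \<Longrightarrow> b \<in> S \<Longrightarrow> a + b \<in> S" "\<And>r a. a \<in> S \<Longrightarrow> r *\<^sub>R a \<in> S"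
  shows "sqrt_one_minus t \<in> S"
proof -
  have "(\<Sum>k<n. sqrt_coeff k *\<^sub>R t ^ k) \<in> S" for n
    by (induction n) (simp_all add: assms(3-6))
  then show ?thesis
    unfolding sqrt_one_minus_def
    using closed_sequentially[OF assms(2), of "\<lambda>n. \<Sum>k<n. sqrt_coeff k *\<^sub>R t ^ k"] summable_LIMSEQ[OF summable_sqrt_series[OF assms(1)]]
    by blast
qed

lemma cstar_star_sqrt_one_minus:
  fixes t :: "'a::{real_normed_algebra_1,banach}"
  assumes "cstar_algebra j st" "norm t \<le> 1/2" "st t = t"
  shows "st (sqrt_one_minus t) = sqrt_one_minus t"
proof -
  have "st (t ^ k) = t ^ k" for k
    by (induction k) (simp_all add: assms power_commutes cstar_star_mult[OF assms(1)] cstar_star_one[OF assms(1)])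
  then show ?thesis
    unfolding sqrt_one_minus_def
      bounded_linear.suminf[OF cstar_bounded_linear_star[OF assms(1)] summable_sqrt_series[OF assms(2)]]
    by (simp add: cstar_star_scaleR[OF assms(1)])
qed

definition unital_star_subalg :: "'a::real_normed_algebra_1 \<Rightarrow> ('a \<Rightarrow> 'a) \<Rightarrow> 'a set \<Rightarrow> bool" where
  "unital_star_subalg j st S \<longleftrightarrow>
     1 \<in> S \<and>
     (\<forall>a\<in>S. \<forall>b\<in>S. a + b \<in> S \<and> a * b \<in> S) \<and>
     (\<forall>c. \<forall>a\<in>S. scC j c a \<in> S) \<and>
     (\<forall>a\<in>S. st a \<in> S)"

lemma unital_star_subalg_if_dense: "dense_unital_star_subalg j st S \<Longrightarrow> unital_star_subalg j st S"
  unfolding dense_unital_star_subalg_def unital_star_subalg_def by blast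

lemma
  assumes "unital_star_subalg j st S"
  shows unital_star_subalg_one: "1 \<in> S"
    and unital_star_subalg_add: "a \<in> S \<Longrightarrow> b \<in> S \<Longrightarrow> a + b \<in> S"
    and unital_star_subalg_mult: "a \<in> S \<Longrightarrow> b \<in> S \<Longrightarrow> a * b \<in> S"
    and unital_star_subalg_scC: "a \<in> S \<Longrightarrow> scC j c a \<in> S"
    and unital_star_subalg_scaleR: "a \<in> S \<Longrightarrow> r *\<^sub>R a \<in> S"
    and unital_star_subalg_star: "a \<in> S \<Longrightarrow> st a \<in> S"
  using assms unfolding unital_star_subalg_def by (metis scC_of_real)+

lemma unital_star_subalg_zero: "unital_star_subalg j st S \<Longrightarrow> 0 \<in> S"
  by (metis scaleR_zero_left unital_star_subalg_one unital_star_subalg_scaleR)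

lemma unital_star_subalg_power: "unital_star_subalg j st S \<Longrightarrow> a \<in> S \<Longrightarrow> a ^ k \<in> S"
  by (induction k) (simp_all add: unital_star_subalg_one unital_star_subalg_mult)

lemma
  assumes "unital_alg_hom_on jA jB S f"
  shows alg_hom_on_add: "a \<in> S \<Longrightarrow> b \<in> S \<Longrightarrow> f (a + b) = f a + f b"
    and alg_hom_on_mult: "a \<in> S \<Longrightarrow> b \<in> S \<Longrightarrow> f (a * b) = f a * f b"
    and alg_hom_on_scaleR: "a \<in> S \<Longrightarrow> f (r *\<^sub>R a) = r *\<^sub>R f a"
    and alg_hom_on_one: "f 1 = 1"
  using assms unfolding unital_alg_hom_on_def by (metis scC_of_real)+

lemma alg_hom_on_zero: "unital_alg_hom_on jA jB S f \<Longrightarrow> 0 \<in> S \<Longrightarrow> f 0 = 0"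
  using alg_hom_on_add[of jA jB S f 0 0] by simp

lemma cstar_unitary_of_selfadjoint:
  assumes A: "cstar_algebra j st"
    and h: "st h = h" and s: "st s = s" and hs: "h * s = s * h" and ss: "s * s = 1 - h * h"
  shows "st (h + j * s) * (h + j * s) = 1" "(h + j * s) + st (h + j * s) = h + h"
proof -
  note jj = complex_unital_banach_algD(1)[OF cstar_complex_unital_banach_alg[OF A]]
  note jc = complex_unital_banach_algD(2)[OF cstar_complex_unital_banach_alg[OF A]]
  have st_u: "st (h + j * s) = h - j * s"
    using cstar_star_add[OF A] cstar_star_mult[OF A] cstar_star_j[OF A] h s jc[of s] by simp
  have hjs: "h * (j * s) = j * (h * s)"
    by (metis jc mult.assoc)
  have jsjs: "(j * s) * (j * s) = - (s * s)"
  proof -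
    have "(j * s) * (j * s) = j * ((s * j) * s)"
      by (simp only: mult.assoc)
    also have "\<dots> = (j * j) * (s * s)"
      by (simp only: jc[of s, symmetric] mult.assoc)
    finally show ?thesis
      using jj by simp
  qed
  have jsh: "(j * s) * h = j * (h * s)"
    by (simp add: mult.assoc hs)
  have "(h - j * s) * (h + j * s) = (h * h + h * (j * s)) - ((j * s) * h + (j * s) * (j * s))"
    by (simp only: left_diff_distrib distrib_left) (simp add: algebra_simps)
  also have "\<dots> = h * h + s * s"
    unfolding hjs jsh jsjs by simp
  also have "\<dots> = 1"
    using ss by simp
  finally show "st (h + j * s) * (h + j * s) = 1"
    using st_u by simp
  show "(h + j * s) + st (h + j * s) = h + h"
    using st_u by simp
qed

lemma norm_star_hom_selfadjoint_le_1:
  fixes jA :: "'a::{real_normed_algebra_1,banach}" and jB :: "'b::{real_normed_algebra_1,banach}"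
  assumes A: "cstar_algebra jA stA" and B: "cstar_algebra jB stB"
    and S: "unital_star_subalg jA stA S" "closed S"
    and \<phi>: "unital_star_hom_on jA stA jB stB S \<phi>"
    and h: "h \<in> S" "stA h = h" "norm h \<le> 1/2"
  shows "norm (\<phi> h) \<le> 1"
proof -
  have \<phi>_alg: "unital_alg_hom_on jA jB S \<phi>" and \<phi>_star: "\<And>a. a \<in> S \<Longrightarrow> \<phi> (stA a) = stB (\<phi> a)"
    using \<phi> unfolding unital_star_hom_on_def by blast+
  define t where "t = h * h"
  have t: "norm t \<le> 1/2"
    using norm_mult_ineq[of h h] h(3) mult_mono[OF h(3) h(3)] unfolding t_def by simp
  define s where "s = sqrt_one_minus t"
  have sS: "s \<in> S"
    unfolding s_def t_def
    by (rule sqrt_one_minus_mem_closed[OF t[unfolded t_def] S(2)])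
      (use S h(1) in \<open>simp_all add: unital_star_subalg_zero unital_star_subalg_power
        unital_star_subalg_mult unital_star_subalg_add unital_star_subalg_scaleR\<close>)
  have s_star: "stA s = s"
    unfolding s_def by (rule cstar_star_sqrt_one_minus[OF A t]) (simp add: t_def h(2) cstar_star_mult[OF A])
  have hs: "h * s = s * h"
    unfolding s_def by (rule sqrt_one_minus_commute[OF t]) (simp add: t_def mult.assoc)
  have ss: "s * s = 1 - h * h"
    unfolding s_def t_def by (rule sqrt_one_minus_square[OF t[unfolded t_def]])
  define u where "u = h + jA * s"
  have uS: "u \<in> S" and u_starS: "stA u \<in> S"
    unfolding u_def using S(1) h(1) sS
    by (metis scC_ii unital_star_subalg_add unital_star_subalg_scC unital_star_subalg_star)+
  note unitary = cstar_unitary_of_selfadjoint[OF A h(2) s_star hs ss, folded u_def]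
  have "stB (\<phi> u) * \<phi> u = 1"
    using unitary(1) alg_hom_on_mult[OF \<phi>_alg u_starS uS] \<phi>_star[OF uS] alg_hom_on_one[OF \<phi>_alg]
    by simp
  then have norm_u: "norm (\<phi> u) \<le> 1"
    by (rule cstar_norm_le_1_if_isometry[OF B])
  have "\<phi> h + \<phi> h = \<phi> u + stB (\<phi> u)"
    using unitary(2) alg_hom_on_add[OF \<phi>_alg h(1) h(1)] alg_hom_on_add[OF \<phi>_alg uS u_starS]
      \<phi>_star[OF uS] by simp
  then have "2 * norm (\<phi> h) \<le> norm (\<phi> u) + norm (stB (\<phi> u))"
    by (metis norm_triangle_ineq norm_scaleR scaleR_2 abs_numeral)
  then show ?thesis
    using norm_u cstar_norm_star[OF B] by simp
qed

text \<open>A *-homomorphism between C*-algebras is in fact contractive; the factor 2 avoids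
spectral theory.\<close>

lemma norm_star_hom_le:
  fixes jA :: "'a::{real_normed_algebra_1,banach}" and jB :: "'b::{real_normed_algebra_1,banach}"
  assumes A: "cstar_algebra jA stA" and B: "cstar_algebra jB stB"
    and S: "unital_star_subalg jA stA S" "closed S"
    and \<phi>: "unital_star_hom_on jA stA jB stB S \<phi>"
    and a: "a \<in> S"
  shows "norm (\<phi> a) \<le> 2 * norm a"
proof (cases "a = 0")
  case True
  have "\<phi> 0 = 0"
    using \<phi> S(1) unital_star_subalg_zero alg_hom_on_zero unfolding unital_star_hom_on_def by blast
  then show ?thesis
    using True by simp
next
  case False
  have \<phi>_alg: "unital_alg_hom_on jA jB S \<phi>" and \<phi>_star: "\<phi> (stA a) = stB (\<phi> a)"
    using \<phi> a unfolding unital_star_hom_on_def by blast+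
  define r where "r = 1 / (2 * (norm a)\<^sup>2)"
  have r: "r > 0"
    using False by (simp add: r_def)
  define h where "h = r *\<^sub>R (stA a * a)"
  have hS: "h \<in> S"
    unfolding h_def using S(1) a
    by (simp add: unital_star_subalg_scaleR unital_star_subalg_mult unital_star_subalg_star)
  have h_star: "stA h = h"
    unfolding h_def using A by (simp add: cstar_star_scaleR cstar_star_mult cstar_star_star)
  have h_norm: "norm h = 1/2"
    unfolding h_def using r False by (simp add: cstar_norm_star_mult_self[OF A] r_def)
  have "norm (\<phi> h) = r * (norm (\<phi> a))\<^sup>2"
    unfolding h_def using r a S(1)
    by (simp add: alg_hom_on_scaleR[OF \<phi>_alg] alg_hom_on_mult[OF \<phi>_alg] \<phi>_star
        cstar_norm_star_mult_self[OF B] unital_star_subalg_mult unital_star_subalg_star)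
  then have "r * (norm (\<phi> a))\<^sup>2 \<le> 1"
    using norm_star_hom_selfadjoint_le_1[OF A B S \<phi> hS h_star] h_norm by simp
  then have "(norm (\<phi> a))\<^sup>2 \<le> 2 * (norm a)\<^sup>2"
    using False by (simp add: r_def field_simps)
  also have "\<dots> \<le> (2 * norm a)\<^sup>2"
    by (simp add: power_mult_distrib)
  finally show ?thesis
    by (rule power2_le_imp_le) simp
qed

lemma
  assumes "circle_action j st \<sigma>" "cmod l = 1"
  shows circle_action_add: "\<sigma> l (a + b) = \<sigma> l a + \<sigma> l b"
    and circle_action_mult: "\<sigma> l (a * b) = \<sigma> l a * \<sigma> l b"
    and circle_action_star: "\<sigma> l (st a) = st (\<sigma> l a)"
    and circle_action_star_hom: "unital_star_hom_on j st j st UNIV (\<sigma> l)"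
  using assms unfolding circle_action_def unital_star_hom_on_def unital_alg_hom_on_def by blast+

lemma spec_sub_mult:
  assumes A: "cstar_algebra j st" and act: "circle_action j st \<sigma>"
    and a: "a \<in> spec_sub j \<sigma> m" and b: "b \<in> spec_sub j \<sigma> n"
  shows "a * b \<in> spec_sub j \<sigma> (m + n)"
  unfolding spec_sub_def
proof (intro CollectI allI impI)
  fix l :: complex
  assume l: "cmod l = 1"
  then have "l \<noteq> 0" by auto
  have "\<sigma> l (a * b) = scC j (l powi m) a * scC j (l powi n) b"
    using circle_action_mult[OF act l] a b l unfolding spec_sub_def by simp
  also have "\<dots> = scC j (l powi (m + n)) (a * b)"
    using \<open>l \<noteq> 0\<close> by (simp add: scC_mult[OF cstar_complex_unital_banach_alg[OF A]] power_int_add)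
  finally show "\<sigma> l (a * b) = scC j (l powi (m + n)) (a * b)" .
qed

lemma spec_sub_star:
  assumes A: "cstar_algebra j st" and act: "circle_action j st \<sigma>"
    and a: "a \<in> spec_sub j \<sigma> n"
  shows "st a \<in> spec_sub j \<sigma> (- n)"
  unfolding spec_sub_def
proof (intro CollectI allI impI)
  fix l :: complex
  assume l: "cmod l = 1"
  have "cmod (l powi n) = 1"
    using l by (simp add: norm_power_int)
  then have "l powi n * cnj (l powi n) = 1"
    using complex_norm_square[of "l powi n"] by simp
  then have cnj_l: "cnj (l powi n) = l powi (- n)"
    unfolding power_int_minus by (rule inverse_unique[symmetric])
  have "\<sigma> l (st a) = st (scC j (l powi n) a)"
    using circle_action_star[OF act l] a l unfolding spec_sub_def by simp
  then show "\<sigma> l (st a) = scC j (l powi (- n)) (st a)"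
    using cstar_star_scC[OF A] cnj_l by simp
qed

lemma bounded_linear_circle_action:
  fixes j :: "'a::{real_normed_algebra_1,banach}"
  assumes A: "cstar_algebra j st" and act: "circle_action j st \<sigma>" and l: "cmod l = 1"
  shows "bounded_linear (\<sigma> l)"
proof (rule bounded_linear_intro[where K = 2])
  have S: "unital_star_subalg j st UNIV"
    unfolding unital_star_subalg_def by simp
  note hom = circle_action_star_hom[OF act l]
  show "\<sigma> l (a + b) = \<sigma> l a + \<sigma> l b" for a b
    by (rule circle_action_add[OF act l])
  have "unital_alg_hom_on j j UNIV (\<sigma> l)"
    using hom unfolding unital_star_hom_on_def by blast
  then show "\<sigma> l (r *\<^sub>R a) = r *\<^sub>R \<sigma> l a" for r a
    by (simp add: alg_hom_on_scaleR)
  show "norm (\<sigma> l a) \<le> norm a * 2" for a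
    using norm_star_hom_le[OF A A S closed_UNIV hom] by (simp add: mult.commute)
qed

lemma bounded_linear_scC: "bounded_linear (scC j c)"
  unfolding scC_def
  by (intro bounded_linear_add bounded_linear_const_scaleR bounded_linear_ident
      bounded_linear_mult_right)

lemma closed_spec_sub:
  fixes j :: "'a::{real_normed_algebra_1,banach}"
  assumes A: "cstar_algebra j st" and act: "circle_action j st \<sigma>"
  shows "closed (spec_sub j \<sigma> n)"
proof -
  have "spec_sub j \<sigma> n = (\<Inter>l\<in>{l. cmod l = 1}. {a. \<sigma> l a = scC j (l powi n) a})"
    unfolding spec_sub_def by auto
  also have "closed \<dots>"
    using bounded_linear_circle_action[OF A act] bounded_linear_scC
    by (intro closed_INT ballI closed_Collect_eq linear_continuous_on) auto
  finally show ?thesis .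
qed

lemma unital_star_subalg_spec_sub_0:
  assumes A: "cstar_algebra j st" and act: "circle_action j st \<sigma>"
  shows "unital_star_subalg j st (spec_sub j \<sigma> 0)"
  unfolding unital_star_subalg_def
proof (intro conjI ballI allI)
  show "1 \<in> spec_sub j \<sigma> 0"
    using act unfolding spec_sub_def circle_action_def by simp
  fix a assume a: "a \<in> spec_sub j \<sigma> 0"
  show "st a \<in> spec_sub j \<sigma> 0"
    using spec_sub_star[OF A act a] by simp
  fix c
  show "scC j c a \<in> spec_sub j \<sigma> 0"
    using act a unfolding spec_sub_def circle_action_def by simp
  fix b assume b: "b \<in> spec_sub j \<sigma> 0"
  show "a + b \<in> spec_sub j \<sigma> 0"
    using act a b unfolding spec_sub_def circle_action_def by simp
  show "a * b \<in> spec_sub j \<sigma> 0"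
    using spec_sub_mult[OF A act a b] by simp
qed

definition norm_bounded_on :: "('a::real_normed_vector \<Rightarrow> 'b::real_normed_vector) \<Rightarrow> 'a set \<Rightarrow> bool" where
  "norm_bounded_on f X \<longleftrightarrow> (\<exists>K\<ge>0. \<forall>x\<in>X. norm (f x) \<le> K * norm x)"

lemma norm_sum_list_le:
  fixes f :: "'a \<Rightarrow> 'b::real_normed_vector"
  shows "norm (\<Sum>z\<leftarrow>zs. f z) \<le> (\<Sum>z\<leftarrow>zs. norm (f z))"
  by (induction zs) (auto intro: order_trans[OF norm_triangle_ineq])

lemma alg_hom_on_sum_list:
  assumes S: "unital_star_subalg jA stA S" and f: "unital_alg_hom_on jA jB S f"
    and g: "\<forall>z\<in>set zs. g z \<in> S"
  shows "(\<Sum>z\<leftarrow>zs. g z) \<in> S \<and> f (\<Sum>z\<leftarrow>zs. g z) = (\<Sum>z\<leftarrow>zs. f (g z))"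
  using g
  by (induction zs)
    (simp_all add: unital_star_subalg_zero[OF S] alg_hom_on_zero[OF f] unital_star_subalg_add[OF S]
      alg_hom_on_add[OF f])

lemma norm_bounded_on_decomposition:
  assumes S: "unital_star_subalg jA stA \<A>" and \<beta>: "unital_alg_hom_on jA jB \<A> \<beta>"
    and Y: "Y \<subseteq> \<A>" "norm_bounded_on \<beta> Y"
    and f: "\<forall>z\<in>set zs. f z \<in> \<A>" and g: "\<forall>z\<in>set zs. \<forall>x\<in>X. g z * x \<in> Y"
    and one: "(\<Sum>z\<leftarrow>zs. f z * g z) = 1"
  shows "norm_bounded_on \<beta> X"
proof -
  obtain K where K: "K \<ge> 0" "\<forall>y\<in>Y. norm (\<beta> y) \<le> K * norm y"
    using Y(2) unfolding norm_bounded_on_def by blast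
  define K' where "K' = (\<Sum>z\<leftarrow>zs. norm (\<beta> (f z)) * (K * norm (g z)))"
  have "norm (\<beta> x) \<le> K' * norm x" if x: "x \<in> X" for x
  proof -
    have gx: "\<forall>z\<in>set zs. g z * x \<in> \<A>"
      using g x Y(1) by blast
    have "x = (\<Sum>z\<leftarrow>zs. f z * (g z * x))"
      using one sum_list_mult_const[of "\<lambda>z. f z * g z" x zs] by (simp add: mult.assoc)
    then have "\<beta> x = (\<Sum>z\<leftarrow>zs. \<beta> (f z * (g z * x)))"
      using alg_hom_on_sum_list[OF S \<beta>, of zs "\<lambda>z. f z * (g z * x)"] f gx
      by (simp add: unital_star_subalg_mult[OF S])
    also have "\<dots> = (\<Sum>z\<leftarrow>zs. \<beta> (f z) * \<beta> (g z * x))"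
      using f gx by (intro arg_cong[where f = sum_list] map_cong) (simp_all add: alg_hom_on_mult[OF \<beta>])
    finally have "norm (\<beta> x) \<le> (\<Sum>z\<leftarrow>zs. norm (\<beta> (f z) * \<beta> (g z * x)))"
      by (simp add: norm_sum_list_le)
    also have "\<dots> \<le> (\<Sum>z\<leftarrow>zs. norm (\<beta> (f z)) * norm (\<beta> (g z * x)))"
      by (intro sum_list_mono norm_mult_ineq)
    also have "\<dots> \<le> (\<Sum>z\<leftarrow>zs. norm (\<beta> (f z)) * (K * norm (g z)) * norm x)"
    proof (rule sum_list_mono)
      fix z assume "z \<in> set zs"
      then have "norm (\<beta> (g z * x)) \<le> K * (norm (g z) * norm x)"
        using K g x by (metis mult_left_mono norm_mult_ineq order_trans)
      then show "norm (\<beta> (f z)) * norm (\<beta> (g z * x)) \<le> norm (\<beta> (f z)) * (K * norm (g z)) * norm x"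
        by (simp add: mult_left_mono mult.assoc)
    qed
    also have "\<dots> = K' * norm x"
      unfolding K'_def by (rule sum_list_mult_const)
    finally show ?thesis .
  qed
  moreover have "K' \<ge> 0"
    unfolding K'_def using K(1) by (intro sum_list_nonneg) auto
  ultimately show ?thesis
    unfolding norm_bounded_on_def by blast
qed

lemma norm_bounded_on_spec_sub_succ:
  assumes A: "cstar_algebra j st" and act: "circle_action j st \<sigma>"
    and S: "unital_star_subalg j st \<A>" and \<beta>: "unital_alg_hom_on j j' \<A> \<beta>"
    and zs: "set zs \<subseteq> \<A> \<inter> spec_sub j \<sigma> 1" "(\<Sum>z\<leftarrow>zs. z * st z) = 1"
    and bounded: "norm_bounded_on \<beta> (\<A> \<inter> spec_sub j \<sigma> n)"
  shows "norm_bounded_on \<beta> (\<A> \<inter> spec_sub j \<sigma> (n + 1))"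
proof (rule norm_bounded_on_decomposition[OF S \<beta> _ bounded _ _ zs(2)])
  show "\<forall>z\<in>set zs. \<forall>x\<in>\<A> \<inter> spec_sub j \<sigma> (n + 1). st z * x \<in> \<A> \<inter> spec_sub j \<sigma> n"
  proof (intro ballI)
    fix z x
    assume z: "z \<in> set zs" and x: "x \<in> \<A> \<inter> spec_sub j \<sigma> (n + 1)"
    have "st z * x \<in> spec_sub j \<sigma> (- 1 + (n + 1))"
      using z zs(1) x by (intro spec_sub_mult[OF A act] spec_sub_star[OF A act]) auto
    moreover have "st z * x \<in> \<A>"
      using z zs(1) x by (intro unital_star_subalg_mult[OF S] unital_star_subalg_star[OF S]) auto
    ultimately show "st z * x \<in> \<A> \<inter> spec_sub j \<sigma> n"
      by simp
  qed
qed (use zs(1) in auto)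

lemma norm_bounded_on_spec_sub_pred:
  assumes A: "cstar_algebra j st" and act: "circle_action j st \<sigma>"
    and S: "unital_star_subalg j st \<A>" and \<beta>: "unital_alg_hom_on j j' \<A> \<beta>"
    and zs: "set zs \<subseteq> \<A> \<inter> spec_sub j \<sigma> 1" "(\<Sum>z\<leftarrow>zs. st z * z) = 1"
    and bounded: "norm_bounded_on \<beta> (\<A> \<inter> spec_sub j \<sigma> n)"
  shows "norm_bounded_on \<beta> (\<A> \<inter> spec_sub j \<sigma> (n - 1))"
proof (rule norm_bounded_on_decomposition[OF S \<beta> _ bounded _ _ zs(2)])
  show "\<forall>z\<in>set zs. \<forall>x\<in>\<A> \<inter> spec_sub j \<sigma> (n - 1). z * x \<in> \<A> \<inter> spec_sub j \<sigma> n"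
  proof (intro ballI)
    fix z x
    assume z: "z \<in> set zs" and x: "x \<in> \<A> \<inter> spec_sub j \<sigma> (n - 1)"
    have "z * x \<in> spec_sub j \<sigma> (1 + (n - 1))"
      using z zs(1) x by (intro spec_sub_mult[OF A act]) auto
    moreover have "z * x \<in> \<A>"
      using z zs(1) x by (intro unital_star_subalg_mult[OF S]) auto
    ultimately show "z * x \<in> \<A> \<inter> spec_sub j \<sigma> n"
      by simp
  qed
qed (use zs(1) S in \<open>auto simp: unital_star_subalg_star\<close>)

lemma norm_bounded_on_spec_sub_0:
  fixes j :: "'a::{real_normed_algebra_1,banach}" and j' :: "'b::{real_normed_algebra_1,banach}"
  assumes A: "cstar_algebra j st" and B: "cstar_algebra j' st'" and act: "circle_action j st \<sigma>"
    and \<pi>: "unital_star_hom_on j st j' st' (spec_sub j \<sigma> 0) \<pi>"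
    and \<pi>_\<beta>: "\<forall>a \<in> \<A> \<inter> spec_sub j \<sigma> 0. \<pi> a = \<beta> a"
  shows "norm_bounded_on \<beta> (\<A> \<inter> spec_sub j \<sigma> 0)"
proof -
  have "norm (\<beta> x) \<le> 2 * norm x" if "x \<in> \<A> \<inter> spec_sub j \<sigma> 0" for x
    using norm_star_hom_le[OF A B unital_star_subalg_spec_sub_0[OF A act] closed_spec_sub[OF A act] \<pi>]
      \<pi>_\<beta> that by (metis IntD2)
  then show ?thesis
    unfolding norm_bounded_on_def by (intro exI[of _ 2]) simp
qed

lemma leibniz_bound_if_norm_bounded_on:
  assumes leibniz: "\<forall>x\<in>X. L (a * x) \<le> L a * norm (\<beta> x) + M * L x"
    and nonneg: "L a \<ge> 0" "M \<ge> 0" "\<forall>x\<in>X. L x \<ge> 0"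
    and bounded: "norm_bounded_on \<beta> X"
  shows "\<exists>C\<ge>0. \<forall>x\<in>X. L (a * x) \<le> C * (L x + norm x)"
proof -
  obtain K where K: "K \<ge> 0" "\<forall>x\<in>X. norm (\<beta> x) \<le> K * norm x"
    using bounded unfolding norm_bounded_on_def by blast
  have "L (a * x) \<le> (L a * K + M) * (L x + norm x)" if x: "x \<in> X" for x
  proof -
    have "L (a * x) \<le> L a * (K * norm x) + M * L x"
      using leibniz K(2) nonneg(1) x by (meson add_right_mono mult_left_mono order_trans)
    also have "\<dots> \<le> (L a * K + M) * (L x + norm x)"
      using nonneg K(1) x by (simp add: algebra_simps)
    finally show ?thesis .
  qed
  moreover have "L a * K + M \<ge> 0"
    using nonneg K(1) by simp
  ultimately show ?thesis
    by blast
qed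

theorem lemma5p3:
  fixes jA :: "'a::{real_normed_algebra_1,banach}" and stA :: "'a \<Rightarrow> 'a"
    and jB :: "'b::{real_normed_algebra_1,banach}" and stB :: "'b \<Rightarrow> 'b"
    and \<sigma> :: "complex \<Rightarrow> 'a \<Rightarrow> 'a"
    and \<A> :: "'a set"
    and \<beta> :: "'a \<Rightarrow> 'b"
    and L :: "'a \<Rightarrow> real"
    and zR zL :: "'a list"
  assumes A: "cstar_algebra jA stA"
    and act: "circle_action jA stA \<sigma>"
    and sub: "dense_unital_star_subalg jA stA \<A>"
    and B: "cstar_algebra jB stB"
    and hom: "unital_alg_hom_on jA jB \<A> \<beta>"
    and slip: "slip_norm_on jA stA \<A> L"
    and a1: "P0 \<sigma> ` \<A> \<subseteq> \<A>"
    and a2: "set zR \<subseteq> \<A> \<inter> spec_sub jA \<sigma> 1" "set zL \<subseteq> \<A> \<inter> spec_sub jA \<sigma> 1"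
    and a3: "sum_list (map (\<lambda>z. z * stA z) zR) = 1"
            "sum_list (map (\<lambda>z. stA z * z) zL) = 1"
    and b1: "\<forall>a\<in>\<A>. \<forall>b\<in>\<A>.
               L (a * b) \<le> L a * norm (\<beta> b) + norm (stB (\<beta> (stA a))) * L b"
    and b2: "\<exists>\<pi>. unital_star_hom_on jA stA jB stB (spec_sub jA \<sigma> 0) \<pi> \<and>
               (\<forall>a \<in> \<A> \<inter> spec_sub jA \<sigma> 0. \<pi> a = \<beta> a)"
  shows "\<forall>n::int. \<forall>y \<in> \<A> \<inter> spec_sub jA \<sigma> n. \<exists>C\<ge>0.
           \<forall>x \<in> \<A> \<inter> spec_sub jA \<sigma> n. L (stA y * x) \<le> C * (L x + norm x)"
proof (intro allI ballI)
  fix n y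
  assume y: "y \<in> \<A> \<inter> spec_sub jA \<sigma> n"
  have S: "unital_star_subalg jA stA \<A>"
    using sub by (rule unital_star_subalg_if_dense)
  have "norm_bounded_on \<beta> (\<A> \<inter> spec_sub jA \<sigma> 0)"
    using b2 norm_bounded_on_spec_sub_0[OF A B act] by blast
  then have bounded: "norm_bounded_on \<beta> (\<A> \<inter> spec_sub jA \<sigma> i)" for i
    using norm_bounded_on_spec_sub_succ[OF A act S hom a2(1) a3(1)]
      norm_bounded_on_spec_sub_pred[OF A act S hom a2(2) a3(2)]
    by (induction i rule: int_induct[where k = 0]) simp_all
  have L_nonneg: "\<forall>a\<in>\<A>. L a \<ge> 0"
    using slip unfolding slip_norm_on_def by blast
  have "stA y \<in> \<A>"
    using S y by (simp add: unital_star_subalg_star)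
  then show "\<exists>C\<ge>0. \<forall>x \<in> \<A> \<inter> spec_sub jA \<sigma> n. L (stA y * x) \<le> C * (L x + norm x)"
    using b1 L_nonneg
    by (intro leibniz_bound_if_norm_bounded_on[OF _ _ _ _ bounded]) auto
qed

end
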